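(* Let $G$ be a DCG containing a cycle $C=(v_1,\dots,v_k)$ of distinct vertices, $k\ge2$, let $H=\textsc{Reverse}(G,C)$, and let $\overline{C}=(v_k,v_{k-1},\dots,v_1)$ be the reversed cycle, which is a cycle of $H$. Then: (1) every vertex has the same set of descendants in $G$ as in $H$; (2) $G=\textsc{Reverse}(H,\overline{C})$.
   Context: A DCG is a directed graph without self-loops. A vertex $x$ is a descendant of $v$ if there is a directed path from $v$ to $x$. $\mathrm{Pa}_G(v)$ is the set of $u$ with $u\to v$ in $G$. For a cycle $C=(v_1,\dots,v_k)$ (edges $v_i\to v_{i+1}$, indices mod $k$), $\textsc{Reverse}(G,C)$ is the DCG on the same vertex set with edge set $$\{v_{i+1}\to v_i\}_{i=1}^k\ \cup\ \{a\to b\in E(G): b\notin C\}\ \cup\ \{w\to v_{i-1} : 1\le i\le k,\ w\in \mathrm{Pa}_G(v_i)\setminus\{v_{i-1}\}\}$$ (indices mod $k$); here, for a cycle listed as $(u_1,\dots,u_k)$, the role of $v_{i-1}$ is played by the predecessor of the vertex along that cycle. *)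

theory Defs
  imports Main
begin

definition dcg :: "'a set \<Rightarrow> ('a \<times> 'a) set \<Rightarrow> bool" where
  "dcg V E \<longleftrightarrow> finite V \<and> E \<subseteq> V \<times> V \<and> (\<forall>v. (v, v) \<notin> E)"

definition pa :: "('a \<times> 'a) set \<Rightarrow> 'a \<Rightarrow> 'a set" where
  "pa E v = {u. (u, v) \<in> E}"

definition desc :: "('a \<times> 'a) set \<Rightarrow> 'a \<Rightarrow> 'a set" where
  "desc E v = {x. (v, x) \<in> E\<^sup>*}"

definition is_cycle :: "('a \<times> 'a) set \<Rightarrow> 'a list \<Rightarrow> bool" where
  "is_cycle E cs \<longleftrightarrow> length cs \<ge> 2 \<and> distinct cs \<and>
     (\<forall>i < length cs. (cs ! i, cs ! ((i + 1) mod length cs)) \<in> E)"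

text \<open>Edge set of Reverse(G, C); the vertex set is unchanged. Index i-1 mod k is (i + k - 1) mod k.\<close>
definition reverse_edges :: "('a \<times> 'a) set \<Rightarrow> 'a list \<Rightarrow> ('a \<times> 'a) set" where
  "reverse_edges E cs =
     (let k = length cs in
       {(cs ! ((i + 1) mod k), cs ! i) | i. i < k}
     \<union> {(a, b). (a, b) \<in> E \<and> b \<notin> set cs}
     \<union> {(w, cs ! ((i + k - 1) mod k)) | i w. i < k \<and> w \<in> pa E (cs ! i) - {cs ! ((i + k - 1) mod k)}})"

end

theory Submission
  imports Defs
begin

text \<open>
  Reversing C only redirects edges into cycle vertices: the cycle edges are flipped, and an edge
  w \<rightarrow> v_i is rerouted to w \<rightarrow> v_(i-1). Since all cycle vertices reach one another both
  in G (along C) and in H (along the reversed cycle), a rerouted edge can be simulated by a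
  path in the other graph, so G and H have the same reflexive transitive closure. Reversing
  the reversed cycle reroutes every edge back, where loop-freeness on C ensures that no spurious
  edge v_i \<rightarrow> v_i is created or lost.
\<close>

lemma mod_pred_eq_iff:
  fixes i j k :: nat
  assumes "i < k" "j < k"
  shows "(i + k - 1) mod k = j \<longleftrightarrow> i = (j + 1) mod k"
proof (cases "i = 0")
  case True
  then show ?thesis using assms by (cases "j = k - 1") auto
next
  case False
  then have "(i + k - 1) mod k = i - 1"
    using assms by (simp add: mod_if)
  then show ?thesis using assms False by (auto simp: mod_if)
qed

lemma rev_nth_Suc_mod:
  assumes "t < length xs"
  shows "\<exists>j < length xs. rev xs ! t = xs ! ((j + 1) mod length xs)
                        \<and> rev xs ! ((t + 1) mod length xs) = xs ! j"
proof (cases "t + 1 = length xs")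
  case True
  have "length xs > 0" using assms by linarith
  with True have "rev xs ! t = xs ! 0" "rev xs ! 0 = xs ! (length xs - 1)"
    by (simp_all add: rev_nth)
  with True \<open>length xs > 0\<close> show ?thesis
    by (intro exI[of _ "length xs - 1"]) auto
next
  case False
  then show ?thesis
    using assms by (intro exI[of _ "length xs - t - 2"]) (auto simp: rev_nth Suc_diff_Suc)
qed

lemma reverse_edges_outside_cycle:
  assumes "b \<notin> set cs"
  shows "(a, b) \<in> reverse_edges E cs \<longleftrightarrow> (a, b) \<in> E"
proof -
  have "cs ! ((i + length cs - 1) mod length cs) \<in> set cs" if "i < length cs" for i
    using that by (intro nth_mem mod_less_divisor) linarith
  then show ?thesis using assms unfolding reverse_edges_def Let_def by auto
qed

lemma reverse_edges_into_cycle: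
  assumes "distinct cs" and j: "j < length cs"
  shows "(a, cs ! j) \<in> reverse_edges E cs \<longleftrightarrow>
     a = cs ! ((j + 1) mod length cs) \<or> (a, cs ! ((j + 1) mod length cs)) \<in> E \<and> a \<noteq> cs ! j"
proof -
  let ?k = "length cs"
  have "?k > 0" using j by linarith
  have inj: "cs ! x = cs ! y \<longleftrightarrow> x = y" if "x < ?k" "y < ?k" for x y
    using assms(1) that by (simp add: nth_eq_iff_index_eq)
  have flipped: "(\<exists>i < ?k. a = cs ! ((i + 1) mod ?k) \<and> cs ! j = cs ! i)
      \<longleftrightarrow> a = cs ! ((j + 1) mod ?k)"
    using inj j by auto
  have rerouted: "(\<exists>i < ?k. cs ! j = cs ! ((i + ?k - 1) mod ?k) \<and> (a, cs ! i) \<in> E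
                       \<and> a \<noteq> cs ! ((i + ?k - 1) mod ?k))
      \<longleftrightarrow> (a, cs ! ((j + 1) mod ?k)) \<in> E \<and> a \<noteq> cs ! j"
  proof -
    have "cs ! j = cs ! ((i + ?k - 1) mod ?k) \<longleftrightarrow> i = (j + 1) mod ?k" if "i < ?k" for i
      using that j \<open>?k > 0\<close> inj[of j "(i + ?k - 1) mod ?k"] mod_pred_eq_iff[of i ?k j]
      by (metis mod_less_divisor)
    then have "(\<exists>i < ?k. cs ! j = cs ! ((i + ?k - 1) mod ?k) \<and> (a, cs ! i) \<in> E
                       \<and> a \<noteq> cs ! ((i + ?k - 1) mod ?k))
      \<longleftrightarrow> (\<exists>i < ?k. i = (j + 1) mod ?k \<and> (a, cs ! i) \<in> E \<and> a \<noteq> cs ! j)"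
      by metis
    then show ?thesis using \<open>?k > 0\<close> by simp
  qed
  have "cs ! j \<in> set cs" using j by simp
  then show ?thesis
    using flipped rerouted unfolding reverse_edges_def Let_def pa_def by blast
qed

lemma is_cycle_reverse_edges:
  assumes "length cs \<ge> 2" "distinct cs"
  shows "is_cycle (reverse_edges E cs) (rev cs)"
  unfolding is_cycle_def
proof (intro conjI allI impI)
  fix t assume "t < length (rev cs)"
  then obtain j where "j < length cs" "rev cs ! t = cs ! ((j + 1) mod length cs)"
      "rev cs ! ((t + 1) mod length cs) = cs ! j"
    using rev_nth_Suc_mod[of t cs] by auto
  then show "(rev cs ! t, rev cs ! ((t + 1) mod length (rev cs))) \<in> reverse_edges E cs"
    using reverse_edges_into_cycle[OF assms(2)] by simp
qed (use assms in auto)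

lemma is_cycle_rtrancl:
  assumes "is_cycle R cs" "x \<in> set cs" "y \<in> set cs"
  shows "(x, y) \<in> R\<^sup>*"
proof -
  let ?k = "length cs"
  have "?k > 0" using assms(2) by (auto simp: length_pos_if_in_set)
  obtain i j where ij: "i < ?k" "j < ?k" "x = cs ! i" "y = cs ! j"
    using assms(2,3) by (auto simp: in_set_conv_nth)
  have "(cs ! i, cs ! ((i + m) mod ?k)) \<in> R\<^sup>*" for m
  proof (induction m)
    case (Suc m)
    have "(i + m) mod ?k < ?k" using \<open>?k > 0\<close> by simp
    then have "(cs ! ((i + m) mod ?k), cs ! (((i + m) mod ?k + 1) mod ?k)) \<in> R"
      using assms(1) unfolding is_cycle_def by blast
    then show ?case
      using Suc.IH by (simp add: mod_Suc_eq rtrancl_into_rtrancl)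
  qed (use ij in simp)
  from this[of "j + ?k - i"] show ?thesis
    using ij by simp
qed

lemma rtrancl_reverse_edges:
  assumes cycle: "is_cycle E cs"
  shows "(reverse_edges E cs)\<^sup>* = E\<^sup>*"
proof -
  let ?H = "reverse_edges E cs" and ?k = "length cs"
  have "?k > 0" using cycle unfolding is_cycle_def by linarith
  have "distinct cs" and cycle_H: "is_cycle ?H (rev cs)"
    using cycle is_cycle_reverse_edges[of cs E] unfolding is_cycle_def by auto
  have "(a, b) \<in> ?H\<^sup>*" if ab: "(a, b) \<in> E" for a b
  proof (cases "b \<in> set cs")
    case True
    then obtain i where i: "i < ?k" "b = cs ! i" by (auto simp: in_set_conv_nth)
    have pred: "(i + ?k - 1) mod ?k < ?k" using \<open>?k > 0\<close> by simp
    have "((i + ?k - 1) mod ?k + 1) mod ?k = i"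
      using mod_pred_eq_iff[OF i(1) pred] by simp
    with pred obtain j where j: "j < ?k" "(j + 1) mod ?k = i" by blast
    have "a = cs ! j \<or> (a, cs ! j) \<in> ?H"
      using reverse_edges_into_cycle[OF \<open>distinct cs\<close> j(1), of a E] ab i j by auto
    moreover have "(cs ! j, b) \<in> ?H\<^sup>*"
      using is_cycle_rtrancl[OF cycle_H] i j(1) by simp
    ultimately show ?thesis by auto
  qed (use ab in \<open>simp add: reverse_edges_outside_cycle r_into_rtrancl\<close>)
  moreover have "(a, b) \<in> E\<^sup>*" if ab: "(a, b) \<in> ?H" for a b
  proof (cases "b \<in> set cs")
    case True
    then obtain j where j: "j < ?k" "b = cs ! j" by (auto simp: in_set_conv_nth)
    let ?s = "cs ! ((j + 1) mod ?k)"
    have "a = ?s \<or> (a, ?s) \<in> E"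
      using reverse_edges_into_cycle[OF \<open>distinct cs\<close> j(1), of a E] ab j by auto
    moreover have "(?s, b) \<in> E\<^sup>*"
      using is_cycle_rtrancl[OF cycle] j \<open>?k > 0\<close> by simp
    ultimately show ?thesis by auto
  qed (use ab in \<open>simp add: reverse_edges_outside_cycle r_into_rtrancl\<close>)
  ultimately show ?thesis
    by (intro equalityI rtrancl_subset_rtrancl subrelI)
qed

lemma reverse_edges_reverse_edges:
  assumes cycle: "is_cycle E cs" and loop_free: "irrefl_on (set cs) E"
  shows "reverse_edges (reverse_edges E cs) (rev cs) = E"
proof (intro set_eqI, clarify)
  fix a b
  let ?H = "reverse_edges E cs" and ?k = "length cs"
  have "distinct cs" using cycle unfolding is_cycle_def by simp
  show "(a, b) \<in> reverse_edges ?H (rev cs) \<longleftrightarrow> (a, b) \<in> E"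
  proof (cases "b \<in> set cs")
    case True
    then obtain t where t: "t < ?k" "b = rev cs ! t"
      by (metis in_set_conv_nth length_rev set_rev)
    then obtain j where j: "j < ?k" "b = cs ! ((j + 1) mod ?k)"
        "rev cs ! ((t + 1) mod ?k) = cs ! j"
      using rev_nth_Suc_mod[of t cs] by auto
    let ?s = "cs ! ((j + 1) mod ?k)"
    have "?s \<in> set cs" using j(1) by (intro nth_mem mod_less_divisor) linarith
    have "(a, b) \<in> reverse_edges ?H (rev cs) \<longleftrightarrow> a = cs ! j \<or> (a, cs ! j) \<in> ?H \<and> a \<noteq> ?s"
      using reverse_edges_into_cycle[of "rev cs" t a ?H] \<open>distinct cs\<close> t j by simp
    also have "\<dots> \<longleftrightarrow> a = cs ! j \<or> (a, ?s) \<in> E \<and> a \<noteq> ?s"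
      using reverse_edges_into_cycle[OF \<open>distinct cs\<close> j(1), of a E] by auto
    also have "\<dots> \<longleftrightarrow> (a, ?s) \<in> E"
      using cycle j(1) loop_free \<open>?s \<in> set cs\<close> unfolding is_cycle_def irrefl_on_def by auto
    finally show ?thesis using j(2) by simp
  qed (simp add: reverse_edges_outside_cycle)
qed

theorem mainTheorem12:
  fixes V :: "'a set" and E :: "('a \<times> 'a) set" and cs :: "'a list"
  assumes "dcg V E"
    and "is_cycle E cs"
  shows "is_cycle (reverse_edges E cs) (rev cs)
    \<and> (\<forall>v \<in> V. desc E v = desc (reverse_edges E cs) v)
    \<and> E = reverse_edges (reverse_edges E cs) (rev cs)"
proof -
  have "length cs \<ge> 2" "distinct cs"
    using assms(2) unfolding is_cycle_def by simp_all
  moreover have "irrefl_on (set cs) E"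
    using assms(1) unfolding dcg_def irrefl_on_def by simp
  ultimately show ?thesis
    using is_cycle_reverse_edges rtrancl_reverse_edges[OF assms(2)]
      reverse_edges_reverse_edges[OF assms(2)]
    unfolding desc_def by simp
qed

end
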